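(* Let $n \ge 1$. Consider $2n$ water tanks: $n$ "red" tanks each initially containing $1$ unit of water, and $n$ "blue" tanks each initially containing $0$ units. There is a strategy (a finite sequence of pairwise equilibrations) after which every red tank contains strictly less than $\frac{2}{\sqrt{n}}$ units of water and every blue tank contains strictly more than $1 - \frac{2}{\sqrt{n}}$ units of water.
   Context: A configuration of water tanks is an assignment of a real number (the amount of water, or water level) $x_a$ to each tank $a$. Equilibrating two tanks $a \neq b$ replaces both $x_a$ and $x_b$ by $\frac{x_a + x_b}{2}$ and leaves all other tanks unchanged. A strategy is a finite sequence of (unordered) pairs of distinct tanks, executed as the corresponding sequence of equilibrations. *)

theory Defs
  imports Complex_Main
begin

type_synonym config = "nat \<Rightarrow> real"

definition equilibrate :: "config \<Rightarrow> nat \<times> nat \<Rightarrow> config" where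
  "equilibrate x p = (let (a, b) = p; m = (x a + x b) / 2 in x(a := m, b := m))"

definition run_strategy :: "config \<Rightarrow> (nat \<times> nat) list \<Rightarrow> config" where
  "run_strategy x s = foldl equilibrate x s"

definition valid_strategy :: "nat set \<Rightarrow> (nat \<times> nat) list \<Rightarrow> bool" where
  "valid_strategy A s = (\<forall>(a, b) \<in> set s. a \<in> A \<and> b \<in> A \<and> a \<noteq> b)"

end

theory Submission
  imports Defs
begin

text \<open>
  First every red tank in turn is equilibrated with every blue tank in turn. Afterwards red tank
  \<open>k\<close> holds \<open>sweep_level (k+1) n\<close> and blue tank \<open>j\<close> holds \<open>1 - sweep_level (j+1) n\<close>, where
  \<open>sweep_level\<close> obeys a Pascal-type recurrence; the red levels increase with \<open>k\<close>. Passing from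
  \<open>n\<close> to \<open>n+1\<close> increases the total red amount by
  \<open>binom(2n,n)/2^(2n+1) \<le> 1/(2 sqrt(2n+1)) \<le> sqrt(n+1) - sqrt n\<close>, so the red tanks hold at most
  \<open>sqrt n\<close> in total. Next the last \<open>B = 2^L > n/2\<close> red tanks are averaged exactly (average both
  halves recursively, then equilibrate them pairwise). This leaves every red tank at most
  \<open>sqrt n / B < 2 / sqrt n\<close>, and doing the same to the last \<open>B\<close> blue tanks keeps every blue tank
  at one minus the level of its red partner.
\<close>

text \<open>\<open>sweep_level (i+1) (j+1)\<close> is the common level of red tank \<open>i\<close> and blue tank \<open>j\<close> right after
  they are equilibrated, when the pairs are processed in lexicographic order of \<open>(i, j)\<close>.\<close>

fun sweep_level :: "nat \<Rightarrow> nat \<Rightarrow> real" where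
  "sweep_level 0 j = 0"
| "sweep_level (Suc k) 0 = 1"
| "sweep_level (Suc k) (Suc j) = (sweep_level k (Suc j) + sweep_level (Suc k) j) / 2"

lemma sweep_level_nonneg: "sweep_level k j \<ge> 0"
  by (induction k j rule: sweep_level.induct) auto

lemma sweep_level_complement: "(k, j) \<noteq> (0, 0) \<Longrightarrow> sweep_level k j + sweep_level j k = 1"
proof (induction k j rule: sweep_level.induct)
  case (1 j)
  then show ?case by (cases j) auto
next
  case (2 k)
  then show ?case by simp
next
  case (3 k j)
  then show ?case by (cases k; cases j) (auto simp: field_simps)
qed

lemma sweep_level_one_left: "sweep_level (Suc 0) j = 1 / 2 ^ j"
  by (induction j) auto

lemma sweep_level_one_right: "sweep_level k (Suc 0) = 1 - 1 / 2 ^ k"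
  by (induction k) (auto simp: field_simps)

lemma sweep_level_diff:
  "sweep_level (Suc k) j - sweep_level (Suc k) (Suc j) = real ((k + j) choose j) / 2 ^ (k + j + 1)"
proof (induction k arbitrary: j)
  case 0
  then show ?case by (simp add: sweep_level_one_left field_simps)
next
  case (Suc k)
  show ?case
  proof (induction j)
    case 0
    show ?case using sweep_level_one_right[of "Suc k"] by (simp add: field_simps)
  next
    case (Suc j)
    let ?d = "\<lambda>k j. sweep_level (Suc k) j - sweep_level (Suc k) (Suc j)"
    have "?d (Suc k) (Suc j) = (?d k (Suc j) + ?d (Suc k) j) / 2"
      by (simp add: field_simps)
    also have "\<dots> = real ((Suc k + Suc j) choose Suc j) / 2 ^ (Suc k + Suc j + 1)"
      using Suc.IH \<open>\<And>j. ?d k j = _\<close>[of "Suc j"] by (simp add: field_simps)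
    finally show ?case .
  qed
qed

lemma sweep_level_antimono_right: "sweep_level k (Suc j) \<le> sweep_level k j"
proof (cases k)
  case (Suc k')
  have "real ((k' + j) choose j) / 2 ^ (k' + j + 1) \<ge> 0"
    by simp
  then show ?thesis
    using sweep_level_diff[of k' j] unfolding Suc by linarith
qed simp

lemma sweep_level_mono_left: "k \<le> k' \<Longrightarrow> sweep_level k j \<le> sweep_level k' j"
proof (induction k' rule: dec_induct)
  case (step k')
  have "sweep_level j (Suc k') \<le> sweep_level j k'"
    by (rule sweep_level_antimono_right)
  then have "sweep_level k' j \<le> sweep_level (Suc k') j"
    using sweep_level_complement[of k' j] sweep_level_complement[of "Suc k'" j]
    by (cases "k' = 0 \<and> j = 0") auto
  with step.IH show ?case by linarith
qed simp

lemma sum_sweep_level_Suc: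
  "(\<Sum>k<m. sweep_level (Suc k) (Suc j)) = (\<Sum>k<m. sweep_level (Suc k) j) - sweep_level m (Suc j)"
proof (induction m)
  case (Suc m)
  then show ?case by (simp add: field_simps)
qed simp

lemma sum_sweep_level_diagonal_Suc:
  "(\<Sum>k<Suc n. sweep_level (Suc k) (Suc n))
     = (\<Sum>k<n. sweep_level (Suc k) n) + real ((2 * n) choose n) / 2 ^ (2 * n + 1)"
proof -
  have "sweep_level (Suc n) n - sweep_level (Suc n) (Suc n)
          = real ((2 * n) choose n) / 2 ^ (2 * n + 1)"
    using sweep_level_diff[of n n] by (simp only: mult_2)
  then show ?thesis
    using sum_sweep_level_Suc[where m = "Suc n" and j = n]
      sum.lessThan_Suc[of "\<lambda>k. sweep_level (Suc k) n" n]
    by linarith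
qed

lemma central_binomial_Suc: "Suc n * ((2 * Suc n) choose Suc n) = 2 * (2 * n + 1) * ((2 * n) choose n)"
proof -
  have "(2 * Suc n) choose Suc n = ((2 * n + 1) choose n) + ((2 * n + 1) choose Suc n)"
    by simp
  also have "(2 * n + 1) choose n = (2 * n + 1) choose Suc n"
    using binomial_symmetric[of n "2 * n + 1"] by simp
  finally have "(2 * Suc n) choose Suc n = 2 * (Suc (2 * n) choose Suc n)"
    by (simp del: binomial_Suc_Suc)
  then show ?thesis
    using Suc_times_binomial[of n "2 * n"] by (simp del: binomial_Suc_Suc)
qed

lemma central_binomial_upper_bound: "(real ((2 * n) choose n) / 4 ^ n)\<^sup>2 * (2 * n + 1) \<le> 1"
proof (induction n)
  case (Suc n)
  define c where "c = real ((2 * n) choose n) / 4 ^ n"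
  have "real ((2 * Suc n) choose Suc n) = 2 * (2 * real n + 1) * real ((2 * n) choose n) / (real n + 1)"
    using arg_cong[OF central_binomial_Suc[of n], of real] by (simp add: field_simps)
  then have c_Suc: "real ((2 * Suc n) choose Suc n) / 4 ^ Suc n = c * (2 * real n + 1) / (2 * real n + 2)"
    unfolding c_def by (simp add: divide_simps) (simp add: algebra_simps)
  have "(c * (2 * real n + 1) / (2 * real n + 2))\<^sup>2 * (2 * real (Suc n) + 1)
      = (c\<^sup>2 * (2 * real n + 1)) * ((2 * real n + 1) * (2 * real n + 3) / (2 * real n + 2)\<^sup>2)"
    by (simp add: field_simps power2_eq_square)
  also have "\<dots> \<le> 1 * 1"
  proof (rule mult_mono)
    show "c\<^sup>2 * (2 * real n + 1) \<le> 1"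
      using Suc.IH unfolding c_def by (simp add: algebra_simps)
    have "(2 * real n + 1) * (2 * real n + 3) \<le> (2 * real n + 2)\<^sup>2"
      by (simp add: power2_eq_square algebra_simps)
    then show "(2 * real n + 1) * (2 * real n + 3) / (2 * real n + 2)\<^sup>2 \<le> 1"
      by simp
  qed auto
  finally show ?case
    unfolding c_Suc by (simp add: ac_simps)
qed simp

lemma inverse_sqrt_le_sqrt_diff:
  fixes x :: real
  assumes "x \<ge> 0"
  shows "1 / sqrt (2 * x + 1) \<le> 2 * (sqrt (x + 1) - sqrt x)"
proof -
  have pos: "sqrt (x + 1) + sqrt x > 0"
    using assms by (simp add: add_pos_nonneg)
  have "(sqrt (x + 1) - sqrt x) * (sqrt (x + 1) + sqrt x) = 1"
    using assms by (simp add: algebra_simps)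
  then have diff: "sqrt (x + 1) - sqrt x = 1 / (sqrt (x + 1) + sqrt x)"
    using pos by (simp add: eq_divide_eq)
  have "sqrt (x + 1) + sqrt x \<le> 2 * sqrt (2 * x + 1)"
    using assms real_sqrt_le_mono[of "x + 1" "2 * x + 1"] real_sqrt_le_mono[of x "2 * x + 1"]
    by linarith
  then have "2 / (2 * sqrt (2 * x + 1)) \<le> 2 / (sqrt (x + 1) + sqrt x)"
    using pos assms by (intro divide_left_mono mult_pos_pos) auto
  then show ?thesis
    unfolding diff by simp
qed

lemma sum_sweep_level_diagonal_le_sqrt: "(\<Sum>k<n. sweep_level (Suc k) n) \<le> sqrt n"
proof (induction n)
  case (Suc n)
  define c where "c = real ((2 * n) choose n) / 4 ^ n"
  have "(2::real) ^ (2 * n + 1) = 2 * 4 ^ n"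
    by (simp add: power_mult)
  then have step: "(\<Sum>k<Suc n. sweep_level (Suc k) (Suc n)) = (\<Sum>k<n. sweep_level (Suc k) n) + c / 2"
    unfolding sum_sweep_level_diagonal_Suc c_def by simp
  have "c\<^sup>2 \<le> 1 / (2 * n + 1)"
    using central_binomial_upper_bound[of n] unfolding c_def by (simp add: field_simps)
  then have "sqrt (c\<^sup>2) \<le> sqrt (1 / (2 * n + 1))"
    using real_sqrt_le_mono by blast
  then have "c \<le> 1 / sqrt (2 * n + 1)"
    unfolding c_def by (simp add: real_sqrt_divide)
  also have "\<dots> \<le> 2 * (sqrt (n + 1) - sqrt n)"
    using inverse_sqrt_le_sqrt_diff[of "real n"] by (simp add: algebra_simps)
  finally show ?case
    using step Suc.IH by simp
qed simp

lemma equilibrate_apply: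
  "equilibrate x (a, b) t = (if t = a \<or> t = b then (x a + x b) / 2 else x t)"
  by (simp add: equilibrate_def Let_def)

lemma run_strategy_Nil [simp]: "run_strategy x [] = x"
  and run_strategy_append [simp]: "run_strategy x (s @ s') = run_strategy (run_strategy x s) s'"
  and run_strategy_single [simp]: "run_strategy x [p] = equilibrate x p"
  by (simp_all add: run_strategy_def)

definition sweep_row :: "nat \<Rightarrow> nat \<Rightarrow> nat \<Rightarrow> (nat \<times> nat) list" where
  "sweep_row m i j = map (\<lambda>j'. (i, m + j')) [0..<j]"

definition sweep :: "nat \<Rightarrow> nat \<Rightarrow> (nat \<times> nat) list" where
  "sweep m p = concat (map (\<lambda>i. sweep_row m i p) [0..<m])"

text \<open>The configuration once red tanks \<open>0..<i\<close> have met all \<open>p\<close> blue tanks and red tank \<open>i\<close> has met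
  blue tanks \<open>0..<j\<close>; blue tanks occupy indices \<open>m..<m+p\<close>.\<close>

definition sweep_state :: "nat \<Rightarrow> nat \<Rightarrow> nat \<Rightarrow> nat \<Rightarrow> config" where
  "sweep_state m p i j t =
    (if t < m then
       (if t < i then sweep_level (Suc t) p else if t = i then sweep_level (Suc i) j else 1)
     else if t < m + p then
       (if t - m < j then sweep_level (Suc i) (t - m + 1) else sweep_level i (t - m + 1))
     else 0)"

lemma sweep_state_step:
  assumes "i < m" "j < p"
  shows "equilibrate (sweep_state m p i j) (i, m + j) = sweep_state m p i (Suc j)"
proof
  fix t
  have "(sweep_state m p i j i + sweep_state m p i j (m + j)) / 2 = sweep_level (Suc i) (Suc j)"
    using assms by (simp add: sweep_state_def add.commute)
  then show "equilibrate (sweep_state m p i j) (i, m + j) t = sweep_state m p i (Suc j) t"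
    using assms by (auto simp: equilibrate_apply sweep_state_def)
qed

lemma run_sweep_row:
  assumes "i < m" "j \<le> p"
  shows "run_strategy (sweep_state m p i 0) (sweep_row m i j) = sweep_state m p i j"
  using assms(2)
proof (induction j)
  case (Suc j)
  then show ?case
    using sweep_state_step[OF assms(1), of j] by (simp add: sweep_row_def)
qed (simp add: sweep_row_def)

lemma sweep_state_next_row: "i < m \<Longrightarrow> sweep_state m p i p = sweep_state m p (Suc i) 0"
  by (rule ext) (auto simp: sweep_state_def less_Suc_eq)

lemma run_sweep_rows:
  "i \<le> m \<Longrightarrow>
   run_strategy (sweep_state m p 0 0) (concat (map (\<lambda>i. sweep_row m i p) [0..<i])) = sweep_state m p i 0"
proof (induction i)
  case (Suc i)
  then show ?case
    using run_sweep_row[of i m p p] sweep_state_next_row[of i m p] by simp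
qed simp

lemma run_sweep:
  "run_strategy (\<lambda>t. if t < m then 1 else 0) (sweep m p) t =
     (if t < m then sweep_level (Suc t) p else if t < m + p then sweep_level m (t - m + 1) else 0)"
proof -
  have "(\<lambda>t. if t < m then 1 else 0) = sweep_state m p 0 0"
    by (rule ext) (simp add: sweep_state_def)
  then show ?thesis
    using run_sweep_rows[of m m p] by (simp add: sweep_def sweep_state_def)
qed

lemma set_sweep: "set (sweep m p) \<subseteq> {(a, b). a < m \<and> m \<le> b \<and> b < m + p}"
  by (auto simp: sweep_def sweep_row_def)

definition flatten_block :: "config \<Rightarrow> nat \<Rightarrow> nat \<Rightarrow> config" where
  "flatten_block x b K t = (if t \<in> {b..<b + K} then (\<Sum>s = b..<b + K. x s) / K else x t)"

lemma run_pairing: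
  assumes "m \<le> K"
  shows "run_strategy x (map (\<lambda>i. (b + i, b + K + i)) [0..<m]) t =
    (if t \<in> {b..<b + m} then (x t + x (t + K)) / 2
     else if t \<in> {b + K..<b + K + m} then (x (t - K) + x t) / 2 else x t)"
  using assms
proof (induction m arbitrary: t)
  case (Suc m)
  let ?z = "run_strategy x (map (\<lambda>i. (b + i, b + K + i)) [0..<m])"
  have "?z (b + m) = x (b + m)" "?z (b + K + m) = x (b + K + m)"
    using Suc by auto
  then show ?case
    using Suc by (auto simp: equilibrate_apply add_ac)
qed simp

fun block_averaging :: "nat \<Rightarrow> nat \<Rightarrow> (nat \<times> nat) list" where
  "block_averaging b 0 = []"
| "block_averaging b (Suc L) =
     block_averaging b L @ block_averaging (b + 2 ^ L) L @
     map (\<lambda>i. (b + i, b + 2 ^ L + i)) [0..<2 ^ L]"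

lemma run_pairing_flattened_halves:
  "run_strategy (flatten_block (flatten_block x b K) (b + K) K) (map (\<lambda>i. (b + i, b + K + i)) [0..<K])
     = flatten_block x b (K + K)"
proof
  fix t
  define a1 where "a1 = (\<Sum>s = b..<b + K. x s) / K"
  define a2 where "a2 = (\<Sum>s = b + K..<b + K + K. x s) / K"
  define y where "y = flatten_block (flatten_block x b K) (b + K) K"
  have y_low: "y t = a1" if "t \<in> {b..<b + K}" for t
    using that by (simp add: y_def flatten_block_def a1_def)
  have y_high: "y t = a2" if "t \<in> {b + K..<b + K + K}" for t
  proof -
    have "(\<Sum>s = b + K..<b + K + K. flatten_block x b K s) = (\<Sum>s = b + K..<b + K + K. x s)"
      by (rule sum.cong) (auto simp: flatten_block_def)
    then show ?thesis
      using that by (simp add: y_def flatten_block_def a2_def)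
  qed
  have mean: "(a1 + a2) / 2 = (\<Sum>s = b..<b + (K + K). x s) / real (K + K)"
    using sum.atLeastLessThan_concat[of b "b + K" "b + K + K" x]
    by (cases "K = 0") (simp_all add: a1_def a2_def field_simps add.assoc)
  consider "t \<in> {b..<b + K}" | "t \<in> {b + K..<b + K + K}" | "t \<notin> {b..<b + (K + K)}"
    by fastforce
  then show "run_strategy y (map (\<lambda>i. (b + i, b + K + i)) [0..<K]) t = flatten_block x b (K + K) t"
  proof cases
    case 1
    then have "y t = a1" "y (t + K) = a2"
      by (simp_all add: y_low y_high)
    with 1 show ?thesis
      using mean by (auto simp: run_pairing flatten_block_def)
  next
    case 2
    then have "t - K \<in> {b..<b + K}"
      by auto
    with 2 have "y (t - K) = a1" "y t = a2"
      by (simp_all add: y_low y_high)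
    with 2 show ?thesis
      using mean by (auto simp: run_pairing flatten_block_def)
  next
    case 3
    then show ?thesis
      by (auto simp: run_pairing flatten_block_def y_def)
  qed
qed

lemma run_block_averaging: "run_strategy x (block_averaging b L) = flatten_block x b (2 ^ L)"
proof (induction L arbitrary: b x)
  case 0
  show ?case
    by (auto simp: flatten_block_def)
next
  case (Suc L)
  then show ?case
    using run_pairing_flattened_halves[of x b "2 ^ L"] by (simp add: mult_2)
qed

lemma set_block_averaging:
  "set (block_averaging b L) \<subseteq> {(a, c). b \<le> a \<and> a < c \<and> c < b + 2 ^ L}"
proof (induction L arbitrary: b)
  case (Suc L)
  from Suc[of b] Suc[of "b + 2 ^ L"] show ?case
    by auto
qed simp

lemma flatten_block_le_mean:
  assumes "mono_on {..<b + K} x" "K > 0" "t < b + K"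
  shows "flatten_block x b K t \<le> (\<Sum>s = b..<b + K. x s) / K"
proof (cases "b \<le> t")
  case False
  have "real (card {b..<b + K}) * x t \<le> (\<Sum>s = b..<b + K. x s)"
    using False assms by (intro sum_bounded_below) (auto intro: mono_onD)
  then show ?thesis
    using False assms(2) by (simp add: flatten_block_def field_simps)
qed (use assms in \<open>simp add: flatten_block_def\<close>)

lemma flatten_blocks_complement:
  assumes complement: "\<And>j. j < c \<Longrightarrow> x (c + j) = 1 - x j" and "b + K \<le> c" "j < c"
  defines "y \<equiv> flatten_block (flatten_block x b K) (c + b) K"
  shows "y (c + j) = 1 - y j"
proof (cases "j \<in> {b..<b + K}")
  case True
  have "(\<Sum>s = c + b..<c + b + K. flatten_block x b K s) = (\<Sum>s = c + b..<c + b + K. x s)"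
    using assms(2) by (intro sum.cong) (auto simp: flatten_block_def)
  also have "\<dots> = (\<Sum>s = b..<b + K. x (s + c))"
    using sum.shift_bounds_nat_ivl[of x b c "b + K"] by (simp add: add_ac)
  also have "\<dots> = (\<Sum>s = b..<b + K. 1 - x s)"
  proof (rule sum.cong)
    fix s
    assume "s \<in> {b..<b + K}"
    then show "x (s + c) = 1 - x s"
      using assms(2) complement[of s] by (simp add: add.commute)
  qed simp
  finally show ?thesis
    using True assms(2,3) by (auto simp: y_def flatten_block_def sum_subtractf field_simps)
next
  case False
  then show ?thesis
    using assms(2,3) complement by (auto simp: y_def flatten_block_def)
qed

lemma mono_on_run_sweep: "mono_on {..<m} (run_strategy (\<lambda>t. if t < m then 1 else 0) (sweep m p))"
  by (auto simp: mono_on_def run_sweep intro: sweep_level_mono_left)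

lemma run_sweep_square_complement:
  assumes "j < n"
  shows "run_strategy (\<lambda>t. if t < n then 1 else 0) (sweep n n) (n + j)
           = 1 - run_strategy (\<lambda>t. if t < n then 1 else 0) (sweep n n) j"
  using assms sweep_level_complement[of n "Suc j"] by (simp add: run_sweep)

lemma sum_run_sweep_square_le_sqrt:
  "(\<Sum>t = b..<n. run_strategy (\<lambda>t. if t < n then 1 else 0) (sweep n n) t) \<le> sqrt n"
proof -
  let ?f = "run_strategy (\<lambda>t. if t < n then 1 else 0) (sweep n n)"
  have "(\<Sum>t = b..<n. ?f t) \<le> (\<Sum>t<n. ?f t)"
    by (intro sum_mono2) (auto simp: run_sweep sweep_level_nonneg)
  also have "\<dots> = (\<Sum>t<n. sweep_level (Suc t) n)"
    by (simp add: run_sweep)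
  finally show ?thesis
    using sum_sweep_level_diagonal_le_sqrt[of n] by linarith
qed

lemma sqrt_divide_less:
  fixes a b :: real
  assumes "0 < a" "a < 2 * b"
  shows "sqrt a / b < 2 / sqrt a"
proof -
  have "sqrt a * sqrt a < 2 * b"
    using assms by simp
  then show ?thesis
    using assms by (simp add: field_simps)
qed

definition sweep_and_average :: "nat \<Rightarrow> nat \<Rightarrow> (nat \<times> nat) list" where
  "sweep_and_average n L =
     sweep n n @ block_averaging (n - 2 ^ L) L @ block_averaging (n + (n - 2 ^ L)) L"

lemma valid_sweep_and_average:
  "2 ^ L \<le> n \<Longrightarrow> valid_strategy {..<2 * n} (sweep_and_average n L)"
  using set_sweep[of n n] set_block_averaging[of "n - 2 ^ L" L]
    set_block_averaging[of "n + (n - 2 ^ L)" L]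
  unfolding sweep_and_average_def valid_strategy_def by fastforce

lemma run_sweep_and_average:
  "run_strategy (\<lambda>i. if i < n then 1 else 0) (sweep_and_average n L)
     = flatten_block (flatten_block (run_strategy (\<lambda>i. if i < n then 1 else 0) (sweep n n))
         (n - 2 ^ L) (2 ^ L)) (n + (n - 2 ^ L)) (2 ^ L)"
  by (simp add: sweep_and_average_def run_block_averaging)

lemma run_sweep_and_average_red_le:
  assumes "2 ^ L \<le> n" "t < n"
  shows "run_strategy (\<lambda>i. if i < n then 1 else 0) (sweep_and_average n L) t \<le> sqrt n / 2 ^ L"
proof -
  let ?f = "run_strategy (\<lambda>i. if i < n then 1 else 0) (sweep n n)"
  have "run_strategy (\<lambda>i. if i < n then 1 else 0) (sweep_and_average n L) t
          = flatten_block ?f (n - 2 ^ L) (2 ^ L) t"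
    using assms by (simp add: run_sweep_and_average flatten_block_def)
  also have "\<dots> \<le> (\<Sum>s = n - 2 ^ L..<n. ?f s) / 2 ^ L"
    using flatten_block_le_mean[of "n - 2 ^ L" "2 ^ L" ?f t] mono_on_run_sweep[of n n] assms
    by simp
  also have "\<dots> \<le> sqrt n / 2 ^ L"
    by (intro divide_right_mono sum_run_sweep_square_le_sqrt) simp
  finally show ?thesis .
qed

lemma run_sweep_and_average_complement:
  assumes "2 ^ L \<le> n" "j < n"
  shows "run_strategy (\<lambda>i. if i < n then 1 else 0) (sweep_and_average n L) (n + j)
           = 1 - run_strategy (\<lambda>i. if i < n then 1 else 0) (sweep_and_average n L) j"
  using flatten_blocks_complement[of n "run_strategy (\<lambda>i. if i < n then 1 else 0) (sweep n n)"
      "n - 2 ^ L" "2 ^ L" j]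
    run_sweep_square_complement assms
  by (simp add: run_sweep_and_average)

theorem theorem1p1:
  fixes n :: nat
  assumes "n \<ge> 1"
  shows "\<exists>s. valid_strategy {..<2*n} s \<and>
    (let y = run_strategy (\<lambda>i. if i < n then 1 else 0) s in
       (\<forall>i<n. y i < 2 / sqrt (real n)) \<and>
       (\<forall>i. n \<le> i \<and> i < 2*n \<longrightarrow> y i > 1 - 2 / sqrt (real n)))"
proof -
  obtain L where L: "2 ^ L \<le> n" "n < 2 * 2 ^ L"
    using ex_power_ivl1[of 2 n] assms by auto
  define y where "y = run_strategy (\<lambda>i. if i < n then 1 else 0) (sweep_and_average n L)"
  have red: "y i < 2 / sqrt n" if "i < n" for i
  proof -
    have "y i \<le> sqrt n / 2 ^ L"
      unfolding y_def using L(1) that by (rule run_sweep_and_average_red_le)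
    also have "\<dots> < 2 / sqrt n"
      using L(2) of_nat_less_iff[of n "2 * 2 ^ L", where 'a = real] assms
      by (intro sqrt_divide_less) simp_all
    finally show ?thesis .
  qed
  have "y i > 1 - 2 / sqrt n" if "n \<le> i" "i < 2 * n" for i
    using run_sweep_and_average_complement[OF L(1), of "i - n"] red[of "i - n"] that
    by (simp add: y_def)
  with red valid_sweep_and_average[OF L(1)] show ?thesis
    unfolding Let_def y_def by blast
qed

end
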